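(* Let $k\ge 2$ be fixed and let $0<\lambda_1<\lambda_2$ be fixed, with $\lambda\mapsto\beta(\lambda)$ continuous at $\lambda_1$. Then there is an integer $d$ such that \[ r\bigl(\lambda_2,d,\beta(\lambda_1)\bigr)\ \ge\ \beta(\lambda_1). \]
   Context: $X_\lambda$ is the Galton--Watson branching process started from a single particle $x_0$ in which each particle has a Poisson($\lambda$) number of children independently, viewed as a rooted tree; $\Pr_\lambda$ is its law. $\mathcal B_d$ is the event that $X_\lambda$ contains a $(k-1)$-ary tree of height $d$ rooted at $x_0$, $\mathcal B$ the event that it contains an infinite $(k-1)$-ary tree rooted at $x_0$, and $\beta(\lambda)=\Pr_\lambda(\mathcal B)$. $\mathcal R_d$ is the event that $\mathcal B_d$ still holds after deleting any single particle of generation $d$ (with its descendants). For $p\in[0,1]$, $r(\lambda,d,p)$ is the probability that $\mathcal R_d$ holds in $X_\lambda$ after deleting all unmarked particles of generation $d$, when, given $X_\lambda$, each particle of generation $d$ is marked independently with probability $p$. *)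

theory Defs
  imports "HOL-Probability.Probability"
begin

text \<open>Ulam--Harris encoding of the branching process.  Particles are labelled by
  lists of naturals; the root x0 is the empty list, and the i-th child of
  particle v is i # v, so the generation of v is length v.  A configuration
  N assigns to every label its (potential) number of children; the particle v
  is present iff every ancestor-edge index is below the parent's child count.\<close>

type_synonym label = "nat list"

fun alive :: "(label \<Rightarrow> nat) \<Rightarrow> label \<Rightarrow> bool" where
  "alive N [] = True"
| "alive N (i # v) = (alive N v \<and> i < N v)"

definition has_tree_height :: "(label \<Rightarrow> nat) \<Rightarrow> nat \<Rightarrow> nat \<Rightarrow> label set \<Rightarrow> bool" where
  "has_tree_height N k d D \<longleftrightarrow>
     (\<exists>S. [] \<in> S \<and>
          (\<forall>v\<in>S. alive N v \<and> length v \<le> d \<and> (\<forall>u. suffix u v \<longrightarrow> u \<notin> D)) \<and>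
          (\<forall>i v. i # v \<in> S \<longrightarrow> v \<in> S) \<and>
          (\<forall>v\<in>S. length v < d \<longrightarrow> card {i. i # v \<in> S} = k - 1))"

definition B_ev :: "(label \<Rightarrow> nat) \<Rightarrow> nat \<Rightarrow> nat \<Rightarrow> bool" where
  "B_ev N k d \<longleftrightarrow> has_tree_height N k d {}"

definition B_inf :: "(label \<Rightarrow> nat) \<Rightarrow> nat \<Rightarrow> bool" where
  "B_inf N k \<longleftrightarrow>
     (\<exists>S. [] \<in> S \<and> (\<forall>v\<in>S. alive N v) \<and>
          (\<forall>i v. i # v \<in> S \<longrightarrow> v \<in> S) \<and>
          (\<forall>v\<in>S. card {i. i # v \<in> S} = k - 1))"

text \<open>The event R_d in the tree obtained from N by first deleting the particles of
  D0 (particles of generation d): B_d holds, and still holds after deleting any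
  single (remaining) particle of generation d.\<close>
definition R_ev_del :: "(label \<Rightarrow> nat) \<Rightarrow> nat \<Rightarrow> nat \<Rightarrow> label set \<Rightarrow> bool" where
  "R_ev_del N k d D0 \<longleftrightarrow>
     has_tree_height N k d D0 \<and>
     (\<forall>w. alive N w \<and> length w = d \<and> w \<notin> D0 \<longrightarrow> has_tree_height N k d (insert w D0))"

definition GW :: "real \<Rightarrow> (label \<Rightarrow> nat) measure" where
  "GW lam = PiM UNIV (\<lambda>_. measure_pmf (poisson_pmf lam))"

definition beta :: "nat \<Rightarrow> real \<Rightarrow> real" where
  "beta k lam = measure (GW lam) {N \<in> space (GW lam). B_inf N k}"

text \<open>Joint law of X_lambda and independent Bernoulli(p) marks (marks of labels outside
  generation d are irrelevant).\<close>
definition MGW :: "real \<Rightarrow> real \<Rightarrow> (label \<Rightarrow> nat \<times> bool) measure" where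
  "MGW lam p = PiM UNIV (\<lambda>_. measure_pmf (pair_pmf (poisson_pmf lam) (bernoulli_pmf p)))"

definition r :: "nat \<Rightarrow> real \<Rightarrow> nat \<Rightarrow> real \<Rightarrow> real" where
  "r k lam d p = measure (MGW lam p)
     {\<omega> \<in> space (MGW lam p).
        R_ev_del (fst \<circ> \<omega>) k d {u. length u = d \<and> \<not> snd (\<omega> u)}}"

end

theory Submission
  imports Defs
begin

text \<open>Mark generation d of X_lam2 with probability b = beta lam1 and let g_d, rho_d be the
  probabilities of B_d and R_d in the marked tree.  Conditioning on the root and thinning the
  Poisson offspring gives g_0 = b, rho_0 = 0 and, with mu = lam2 g_d,
  g_(d+1) = P(Po mu \<ge> k-1) and rho_(d+1) = P(Po mu \<ge> k) + P(Po mu = k-1) (rho_d / g_d)^(k-1).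
  The fixed-point inequality b \<le> P(Po (lam1 b) \<ge> k-1) < P(Po (lam2 b) \<ge> k-1) makes g_d
  increase to a fixed point G > b.  This fixed point is stable, since f(x)/x, for the Poisson
  tail f, keeps increasing as long as x f'(x) \<ge> f(x).  Stability makes 1 - rho_d / g_d
  contract geometrically, so rho_d tends to G > b.\<close>

section \<open>Poisson tails\<close>

definition poisson_term :: "nat \<Rightarrow> real \<Rightarrow> real" where
  "poisson_term j x = exp (-x) * x ^ j / fact j"

text \<open>The probability that a Poisson(x) variable is less than m, defined for every real x
  so that it can be differentiated.\<close>
definition poisson_cdf :: "nat \<Rightarrow> real \<Rightarrow> real" where
  "poisson_cdf m x = (\<Sum>j<m. poisson_term j x)"

lemma poisson_term_pos: "0 < x \<Longrightarrow> 0 < poisson_term j x"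
  by (simp add: poisson_term_def)

lemma poisson_term_nonneg: "0 \<le> x \<Longrightarrow> 0 \<le> poisson_term j x"
  by (simp add: poisson_term_def)

lemma poisson_term_Suc: "real (Suc n) * poisson_term (Suc n) x = x * poisson_term n x"
  by (simp add: poisson_term_def)

lemma poisson_cdf_Suc: "poisson_cdf (Suc m) x = poisson_cdf m x + poisson_term m x"
  by (simp add: poisson_cdf_def)

lemma poisson_cdf_0: "0 < m \<Longrightarrow> poisson_cdf m 0 = 1"
proof (induction m)
  case (Suc m)
  then show ?case by (cases m) (auto simp: poisson_cdf_def poisson_term_def)
qed simp

lemma poisson_cdf_nonneg: "0 \<le> x \<Longrightarrow> 0 \<le> poisson_cdf m x"
  unfolding poisson_cdf_def by (intro sum_nonneg poisson_term_nonneg)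

lemma continuous_on_poisson_cdf: "continuous_on S (poisson_cdf m)"
  unfolding poisson_cdf_def[abs_def] poisson_term_def by (intro continuous_intros) auto

lemma has_real_derivative_poisson_term:
  "(poisson_term (Suc j) has_real_derivative poisson_term j x - poisson_term (Suc j) x) (at x)"
proof -
  have "(poisson_term (Suc j) has_real_derivative
      (exp (-x) * (real (Suc j) * x ^ j) - exp (-x) * x ^ Suc j) / fact (Suc j)) (at x)"
    unfolding poisson_term_def[abs_def]
    by (rule derivative_eq_intros refl | simp)+
  moreover have "(exp (-x) * (real (Suc j) * x ^ j) - exp (-x) * x ^ Suc j) / fact (Suc j)
      = poisson_term j x - poisson_term (Suc j) x"
    unfolding poisson_term_def fact_Suc by (simp add: diff_divide_distrib)
  ultimately show ?thesis by simp
qed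

lemma has_real_derivative_poisson_cdf:
  "(poisson_cdf (Suc n) has_real_derivative - poisson_term n x) (at x)"
proof (induction n)
  case 0
  show ?case
    unfolding poisson_cdf_def[abs_def] poisson_term_def by (auto intro!: derivative_eq_intros)
next
  case (Suc n)
  have "poisson_cdf (Suc (Suc n)) = (\<lambda>x. poisson_cdf (Suc n) x + poisson_term (Suc n) x)"
    by (simp add: poisson_cdf_Suc[abs_def])
  then show ?case
    using DERIV_add[OF Suc has_real_derivative_poisson_term[of n x]] by simp
qed

lemma poisson_cdf_strict_antimono:
  assumes "0 \<le> a" "a < b" "0 < m"
  shows "poisson_cdf m b < poisson_cdf m a"
proof -
  obtain n where m: "m = Suc n" using \<open>0 < m\<close> gr0_implies_Suc by blast
  show ?thesis unfolding m
  proof (rule DERIV_neg_imp_decreasing_open[OF \<open>a < b\<close>])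
    fix x assume "a < x" "x < b"
    then show "\<exists>y. DERIV (poisson_cdf (Suc n)) x :> y \<and> y < 0"
      using has_real_derivative_poisson_cdf poisson_term_pos \<open>0 \<le> a\<close> by force
  qed (rule continuous_on_poisson_cdf)
qed

lemma poisson_cdf_antimono:
  "0 \<le> a \<Longrightarrow> a \<le> b \<Longrightarrow> 0 < m \<Longrightarrow> poisson_cdf m b \<le> poisson_cdf m a"
  using poisson_cdf_strict_antimono[of a b m] by (cases "a = b") auto

text \<open>For the tail \<open>f = 1 - poisson_cdf (Suc n)\<close> this is \<open>x f' x - f x\<close>, whose sign is
  that of the derivative of \<open>f x / x\<close>.\<close>
definition poisson_tail_gap :: "nat \<Rightarrow> real \<Rightarrow> real" where
  "poisson_tail_gap n x = x * poisson_term n x - (1 - poisson_cdf (Suc n) x)"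

lemma has_real_derivative_poisson_tail_gap:
  "(poisson_tail_gap n has_real_derivative (real n - x) * poisson_term n x) (at x)"
proof -
  have gap: "poisson_tail_gap n =
      (\<lambda>x. real (Suc n) * poisson_term (Suc n) x - 1 + poisson_cdf (Suc n) x)"
    by (simp add: poisson_tail_gap_def poisson_term_Suc fun_eq_iff del: of_nat_Suc)
  have "(poisson_tail_gap n has_real_derivative
      real (Suc n) * (poisson_term n x - poisson_term (Suc n) x) - poisson_term n x) (at x)"
    unfolding gap
    by (rule derivative_eq_intros has_real_derivative_poisson_term
        has_real_derivative_poisson_cdf refl | simp)+
  moreover have "real (Suc n) * (poisson_term n x - poisson_term (Suc n) x) - poisson_term n x
      = (real n - x) * poisson_term n x"
    using poisson_term_Suc[of n x]
    by (simp add: algebra_simps del: of_nat_Suc) (simp add: algebra_simps)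
  ultimately show ?thesis by simp
qed

lemma poisson_tail_gap_0: "poisson_tail_gap n 0 = 0"
  by (simp add: poisson_tail_gap_def poisson_cdf_0)

lemma continuous_on_poisson_tail_gap: "continuous_on S (poisson_tail_gap n)"
  unfolding poisson_tail_gap_def[abs_def] poisson_term_def
  by (intro continuous_intros continuous_on_poisson_cdf) auto

text \<open>The gap increases on \<open>[0, n]\<close> and decreases afterwards, starting from \<open>0\<close>.\<close>
lemma poisson_tail_gap_pos:
  assumes "0 \<le> poisson_tail_gap n s" "0 < x" "x < s"
  shows "0 < poisson_tail_gap n x"
proof (cases "x \<le> real n")
  case True
  have "poisson_tail_gap n 0 < poisson_tail_gap n x"
  proof (rule DERIV_pos_imp_increasing_open[OF \<open>0 < x\<close>])
    fix y assume "0 < y" "y < x"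
    then show "\<exists>z. DERIV (poisson_tail_gap n) y :> z \<and> 0 < z"
      using has_real_derivative_poisson_tail_gap poisson_term_pos True by force
  qed (rule continuous_on_poisson_tail_gap)
  then show ?thesis by (simp add: poisson_tail_gap_0)
next
  case False
  have "poisson_tail_gap n s < poisson_tail_gap n x"
  proof (rule DERIV_neg_imp_decreasing_open[OF \<open>x < s\<close>])
    fix y assume "x < y" "y < s"
    then have "(real n - y) * poisson_term n y < 0"
      using False \<open>0 < x\<close> by (intro mult_neg_pos poisson_term_pos) auto
    then show "\<exists>z. DERIV (poisson_tail_gap n) y :> z \<and> z < 0"
      using has_real_derivative_poisson_tail_gap by blast
  qed (rule continuous_on_poisson_tail_gap)
  then show ?thesis using assms(1) by simp
qed

lemma poisson_tail_ratio_strict_mono: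
  assumes "0 < a" "a < s" "0 \<le> poisson_tail_gap n s"
  shows "(1 - poisson_cdf (Suc n) a) / a < (1 - poisson_cdf (Suc n) s) / s"
proof (rule DERIV_pos_imp_increasing_open[OF \<open>a < s\<close>])
  fix y assume y: "a < y" "y < s"
  then have "y \<noteq> 0" using assms by auto
  have "((\<lambda>x. (1 - poisson_cdf (Suc n) x) / x)
      has_real_derivative poisson_tail_gap n y / (y * y)) (at y)"
    using DERIV_divide[OF DERIV_diff[OF DERIV_const has_real_derivative_poisson_cdf] DERIV_ident
        \<open>y \<noteq> 0\<close>]
    by (simp add: poisson_tail_gap_def algebra_simps)
  moreover have "0 < poisson_tail_gap n y / (y * y)"
    using poisson_tail_gap_pos[OF assms(3)] y assms by simp
  ultimately show "\<exists>z. DERIV (\<lambda>x. (1 - poisson_cdf (Suc n) x) / x) y :> z \<and> 0 < z" by blast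
next
  show "continuous_on {a..s} (\<lambda>x. (1 - poisson_cdf (Suc n) x) / x)"
    using assms by (intro continuous_intros continuous_on_poisson_cdf) auto
qed

lemma tendsto_zero_if_eventually_contracting:
  fixes e c :: "nat \<Rightarrow> real"
  assumes nonneg: "\<And>d. 0 \<le> e d" and step: "\<And>d. e (Suc d) \<le> c d * e d"
    and lim: "c \<longlonglongrightarrow> L" and "L < 1"
  shows "e \<longlonglongrightarrow> 0"
proof -
  define q where "q = (1 + max L 0) / 2"
  have q: "0 < q" "q < 1" "L < q" using \<open>L < 1\<close> by (auto simp: q_def)
  obtain N where N: "\<And>d. N \<le> d \<Longrightarrow> c d < q"
    using order_tendstoD(2)[OF lim \<open>L < q\<close>] unfolding eventually_sequentially by blast
  have bound: "e (j + N) \<le> q ^ j * e N" for j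
  proof (induction j)
    case (Suc j)
    have "e (Suc j + N) \<le> c (j + N) * e (j + N)" using step by simp
    also have "\<dots> \<le> q * (q ^ j * e N)"
    proof (rule mult_mono)
      show "c (j + N) \<le> q" using N[of "j + N"] by simp
    qed (use Suc nonneg q in simp_all)
    finally show ?case by simp
  qed simp
  have "\<forall>j. norm (e (j + N)) \<le> q ^ j * e N" using bound nonneg by simp
  moreover have "(\<lambda>j. q ^ j * e N) \<longlonglongrightarrow> 0"
    using q by (intro tendsto_mult_left_zero LIMSEQ_power_zero) auto
  ultimately have "(\<lambda>j. e (j + N)) \<longlonglongrightarrow> 0"
    by (rule Lim_null_comparison[OF always_eventually])
  then show ?thesis by (rule LIMSEQ_offset)
qed

context
  fixes n :: nat and l1 l2 b :: real and g :: "nat \<Rightarrow> real"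
  assumes lam: "0 < l1" "l1 < l2"
    and b: "0 < b" "b \<le> 1 - poisson_cdf (Suc n) (l1 * b)"
    and g_0: "g 0 = b" and g_Suc: "\<And>d. g (Suc d) = 1 - poisson_cdf (Suc n) (l2 * g d)"
begin

lemma poisson_iteration_incseq: "incseq g" and poisson_iteration_gt: "b < g 1"
proof -
  show g1: "b < g 1"
    using poisson_cdf_strict_antimono[of "l1 * b" "l2 * b" "Suc n"] lam b g_0 g_Suc[of 0] by simp
  have "b \<le> g d \<and> g d \<le> g (Suc d)" for d
  proof (induction d)
    case (Suc d)
    then have "poisson_cdf (Suc n) (l2 * g (Suc d)) \<le> poisson_cdf (Suc n) (l2 * g d)"
      using lam b by (intro poisson_cdf_antimono) auto
    then show ?case using Suc g_Suc[of d] g_Suc[of "Suc d"] by simp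
  qed (use g1 g_0 in simp)
  then show "incseq g" by (simp add: incseq_SucI)
qed

lemma poisson_iteration_ge: "b \<le> g d"
  using poisson_iteration_incseq g_0 by (metis incseq_def zero_le)

lemma poisson_iteration_le_1: "g d \<le> 1"
proof (cases d)
  case 0
  then show ?thesis using b lam g_0 poisson_cdf_nonneg[of "l1 * b" "Suc n"] by simp
next
  case (Suc d')
  have "0 \<le> l2 * g d'" using b lam poisson_iteration_ge[of d'] by simp
  then show ?thesis using Suc g_Suc[of d'] poisson_cdf_nonneg by fastforce
qed

lemma poisson_iteration_stable_limit:
  obtains G where "g \<longlonglongrightarrow> G" "b < G" "l2 * G * poisson_term n (l2 * G) < G"
proof -
  obtain G where lim: "g \<longlonglongrightarrow> G" and le_G: "\<And>d. g d \<le> G"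
    using incseq_convergent[OF poisson_iteration_incseq] poisson_iteration_le_1 by blast
  have "b < G" using poisson_iteration_gt le_G[of 1] by simp
  have fixed: "1 - poisson_cdf (Suc n) (l2 * G) = G"
  proof (rule LIMSEQ_unique)
    show "(\<lambda>d. g (Suc d)) \<longlonglongrightarrow> 1 - poisson_cdf (Suc n) (l2 * G)"
      unfolding g_Suc
      by (intro tendsto_intros continuous_on_tendsto_compose[OF continuous_on_poisson_cdf[of UNIV]]
          lim) simp_all
    show "(\<lambda>d. g (Suc d)) \<longlonglongrightarrow> G" using lim by (rule LIMSEQ_Suc)
  qed
  text \<open>If the fixed point were not stable, \<open>f x / x\<close> would still be increasing up to it, so
    \<open>g 1 / (l2 * b) < G / (l2 * G)\<close>, contradicting \<open>b < g 1\<close>.\<close>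
  have "l2 * G * poisson_term n (l2 * G) < G"
  proof (rule ccontr)
    assume "\<not> ?thesis"
    then have "0 \<le> poisson_tail_gap n (l2 * G)"
      by (simp add: poisson_tail_gap_def fixed)
    then have "(1 - poisson_cdf (Suc n) (l2 * b)) / (l2 * b)
        < (1 - poisson_cdf (Suc n) (l2 * G)) / (l2 * G)"
      using lam b \<open>b < G\<close> by (intro poisson_tail_ratio_strict_mono) auto
    then have "g 1 / (l2 * b) < 1 / l2"
      using lam b \<open>b < G\<close> g_0 g_Suc[of 0] by (simp add: fixed)
    then show False
      using lam b poisson_iteration_gt by (simp add: field_simps)
  qed
  with lim \<open>b < G\<close> show thesis by (rule that)
qed

lemma poisson_iteration_pos: "0 < g d"
  using b poisson_iteration_ge[of d] by simp

context
  fixes rho :: "nat \<Rightarrow> real"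
  assumes rho_Suc: "\<And>d. rho (Suc d) = 1 - poisson_cdf (Suc (Suc n)) (l2 * g d)
      + exp (-(l2 * g d)) * (l2 * rho d) ^ Suc n / fact (Suc n)"
    and rho_nonneg: "\<And>d. 0 \<le> rho d" and rho_le: "\<And>d. rho d \<le> g d"
begin

lemma robust_ratio_step:
  "1 - rho (Suc d) / g (Suc d)
    \<le> l2 * g d * poisson_term n (l2 * g d) / g (Suc d) * (1 - rho d / g d)"
proof -
  let ?mu = "l2 * g d"
  define x where "x = rho d / g d"
  have g_pos: "0 < g d" "0 < g (Suc d)" by (simp_all add: poisson_iteration_pos)
  have x: "0 \<le> x" "x \<le> 1" using rho_nonneg[of d] rho_le[of d] g_pos by (simp_all add: x_def)
  have l2_rho: "l2 * rho d = ?mu * x" using g_pos by (simp add: x_def)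
  have "exp (-?mu) * (l2 * rho d) ^ Suc n / fact (Suc n) = poisson_term (Suc n) ?mu * x ^ Suc n"
    unfolding l2_rho poisson_term_def power_mult_distrib by simp
  then have "rho (Suc d) = g (Suc d) - poisson_term (Suc n) ?mu * (1 - x ^ Suc n)"
    by (simp add: rho_Suc g_Suc poisson_cdf_Suc[of "Suc n"] algebra_simps)
  then have "1 - rho (Suc d) / g (Suc d) = poisson_term (Suc n) ?mu * (1 - x ^ Suc n) / g (Suc d)"
    using g_pos by (simp add: field_simps)
  also have "\<dots> \<le> poisson_term (Suc n) ?mu * (real (Suc n) * (1 - x)) / g (Suc d)"
  proof -
    have "1 + real (Suc n) * (x - 1) \<le> (1 + (x - 1)) ^ Suc n"
      using x by (intro Bernoulli_inequality) simp
    then have "1 - x ^ Suc n \<le> real (Suc n) * (1 - x)" by (simp add: algebra_simps)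
    moreover have "0 \<le> ?mu" using lam g_pos by simp
    ultimately show ?thesis
      using g_pos by (intro divide_right_mono mult_left_mono poisson_term_nonneg) auto
  qed
  also have "\<dots> = ?mu * poisson_term n ?mu / g (Suc d) * (1 - x)"
    by (simp add: poisson_term_Suc[symmetric] del: of_nat_Suc)
  finally show ?thesis by (simp add: x_def)
qed

lemma robust_iteration_exceeds: "\<exists>d. b < rho d"
proof -
  obtain G where lim: "g \<longlonglongrightarrow> G" and "b < G" and stable: "l2 * G * poisson_term n (l2 * G) < G"
    by (rule poisson_iteration_stable_limit)
  have "(\<lambda>d. l2 * g d * poisson_term n (l2 * g d) / g (Suc d))
      \<longlonglongrightarrow> l2 * G * poisson_term n (l2 * G) / G"
    unfolding poisson_term_def using \<open>b < G\<close> b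
    by (intro tendsto_intros lim LIMSEQ_Suc) auto
  then have "(\<lambda>d. 1 - rho d / g d) \<longlonglongrightarrow> 0"
    using robust_ratio_step rho_le poisson_iteration_pos stable \<open>b < G\<close> b
    by (intro tendsto_zero_if_eventually_contracting) auto
  then have "(\<lambda>d. (1 - (1 - rho d / g d)) * g d) \<longlonglongrightarrow> (1 - 0) * G"
    using lim by (intro tendsto_intros)
  moreover have "(1 - (1 - rho d / g d)) * g d = rho d" for d
    using poisson_iteration_pos[of d] by simp
  ultimately have "rho \<longlonglongrightarrow> G" by simp
  then have "\<forall>\<^sub>F d in sequentially. b < rho d" using \<open>b < G\<close> by (rule order_tendstoD(1))
  then show ?thesis by (auto simp: eventually_sequentially)
qed

end

end

section \<open>Trees in the Ulam--Harris encoding\<close>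

text \<open>Ancestors of a label are its suffixes, so the subtree of the i-th child of the root consists
  of the labels ending in i.\<close>
definition subtree :: "(label \<Rightarrow> 'a) \<Rightarrow> nat \<Rightarrow> label \<Rightarrow> 'a" where
  "subtree N i = (\<lambda>v. N (v @ [i]))"

definition subtree_set :: "label set \<Rightarrow> nat \<Rightarrow> label set" where
  "subtree_set D i = {v. v @ [i] \<in> D}"

lemma mem_subtree_set [simp]: "v \<in> subtree_set D i \<longleftrightarrow> v @ [i] \<in> D"
  by (simp add: subtree_set_def)

lemma alive_snoc: "alive N (v @ [i]) \<longleftrightarrow> i < N [] \<and> alive (subtree N i) v"
  by (induction v) (auto simp: subtree_def)

text \<open>The height h = \<infinity> encodes the infinite trees of B_inf.\<close>
definition tree_witness :: "(label \<Rightarrow> nat) \<Rightarrow> nat \<Rightarrow> enat \<Rightarrow> label set \<Rightarrow> label set \<Rightarrow> bool" where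
  "tree_witness N k h D S \<longleftrightarrow> [] \<in> S \<and>
     (\<forall>v\<in>S. alive N v \<and> enat (length v) \<le> h \<and> (\<forall>u. suffix u v \<longrightarrow> u \<notin> D)) \<and>
     (\<forall>i v. i # v \<in> S \<longrightarrow> v \<in> S) \<and>
     (\<forall>v\<in>S. enat (length v) < h \<longrightarrow> card {i. i # v \<in> S} = k - 1)"

lemma has_tree_height_iff_witness:
  "has_tree_height N k d D \<longleftrightarrow> (\<exists>S. tree_witness N k (enat d) D S)"
  unfolding has_tree_height_def tree_witness_def by simp

lemma B_inf_iff_witness: "B_inf N k \<longleftrightarrow> (\<exists>S. tree_witness N k \<infinity> {} S)"
  unfolding B_inf_def tree_witness_def by simp

lemma tree_witness_subtree:
  assumes S: "tree_witness N k (eSuc h) D S" and "[i] \<in> S"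
  shows "tree_witness (subtree N i) k h (subtree_set D i) (subtree_set S i)"
  unfolding tree_witness_def
proof (intro conjI ballI allI impI)
  show "[] \<in> subtree_set S i" using \<open>[i] \<in> S\<close> by simp
next
  fix v assume "v \<in> subtree_set S i"
  then have v: "v @ [i] \<in> S" by simp
  then show "alive (subtree N i) v" using S alive_snoc by (auto simp: tree_witness_def)
  show "enat (length v) \<le> h" using v S by (auto simp: tree_witness_def eSuc_enat[symmetric])
  fix u assume "suffix u v"
  then show "u \<notin> subtree_set D i" using v S by (auto simp: tree_witness_def)
next
  fix j v assume "j # v \<in> subtree_set S i"
  then show "v \<in> subtree_set S i" using S by (auto simp: tree_witness_def)
next
  fix v assume "v \<in> subtree_set S i" "enat (length v) < h"
  then have "v @ [i] \<in> S" "enat (length (v @ [i])) < eSuc h"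
    by (simp_all add: eSuc_enat[symmetric])
  moreover have "\<forall>v\<in>S. enat (length v) < eSuc h \<longrightarrow> card {j. j # v \<in> S} = k - 1"
    using S unfolding tree_witness_def by blast
  ultimately show "card {j. j # v \<in> subtree_set S i} = k - 1" by simp
qed

lemma card_children_with_witness:
  assumes S: "tree_witness N k (eSuc h) D S"
  shows "k - 1 \<le> card {i. i < N [] \<and> (\<exists>S. tree_witness (subtree N i) k h (subtree_set D i) S)}"
proof -
  have sub: "{i. [i] \<in> S}
      \<subseteq> {i. i < N [] \<and> (\<exists>S. tree_witness (subtree N i) k h (subtree_set D i) S)}"
  proof (intro subsetI CollectI conjI)
    fix i assume "i \<in> {i. [i] \<in> S}"
    then have i: "[i] \<in> S" by simp
    then have "alive N [i]" using S unfolding tree_witness_def by blast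
    then show "i < N []" by simp
    show "\<exists>S. tree_witness (subtree N i) k h (subtree_set D i) S"
      using tree_witness_subtree[OF S i] by blast
  qed
  have "card {i. [i] \<in> S} = k - 1"
  proof -
    have "enat (length ([] :: label)) < eSuc h" by (simp add: zero_enat_def[symmetric])
    then show ?thesis using S unfolding tree_witness_def by simp
  qed
  moreover have "finite {i. i < N [] \<and> (\<exists>S. tree_witness (subtree N i) k h (subtree_set D i) S)}"
    by simp
  ultimately show ?thesis using card_mono[OF _ sub] by simp
qed

definition graft :: "nat set \<Rightarrow> (nat \<Rightarrow> label set) \<Rightarrow> label set" where
  "graft J T = insert [] {v @ [i] |v i. i \<in> J \<and> v \<in> T i}"

lemma Nil_mem_graft [simp]: "[] \<in> graft J T"
  by (simp add: graft_def)

lemma snoc_mem_graft [simp]: "v @ [i] \<in> graft J T \<longleftrightarrow> i \<in> J \<and> v \<in> T i"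
  by (auto simp: graft_def)

lemma mem_graftE:
  assumes "w \<in> graft J T"
  obtains "w = []" | v i where "w = v @ [i]" "i \<in> J" "v \<in> T i"
  using assms by (auto simp: graft_def)

lemma graft_parent_closed:
  assumes T: "\<And>i j v. i \<in> J \<Longrightarrow> j # v \<in> T i \<Longrightarrow> v \<in> T i" and parent: "j # w \<in> graft J T"
  shows "w \<in> graft J T"
proof -
  obtain v i where jw: "j # w = v @ [i]" "i \<in> J" "v \<in> T i"
    using parent by (cases rule: mem_graftE) auto
  show ?thesis
  proof (cases v)
    case (Cons j' v')
    then show ?thesis using jw T[of i] by auto
  qed (use jw in simp)
qed

lemma tree_witness_graft:
  assumes "[] \<notin> D" "card J = k - 1"
    and T: "\<And>i. i \<in> J \<Longrightarrow> i < N [] \<and> tree_witness (subtree N i) k h (subtree_set D i) (T i)"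
  shows "tree_witness N k (eSuc h) D (graft J T)"
proof -
  have live: "alive N w \<and> enat (length w) \<le> eSuc h \<and> (\<forall>u. suffix u w \<longrightarrow> u \<notin> D)"
    if "w \<in> graft J T" for w
    using that
  proof (cases rule: mem_graftE)
    case 1
    then show ?thesis using \<open>[] \<notin> D\<close> by (simp add: zero_enat_def[symmetric])
  next
    case (2 v i)
    then show ?thesis
      using T[of i] \<open>[] \<notin> D\<close> by (auto simp: tree_witness_def alive_snoc eSuc_enat[symmetric])
  qed
  have closed: "w \<in> graft J T" if "j # w \<in> graft J T" for j w
    by (rule graft_parent_closed[OF _ that]) (use T in \<open>auto simp: tree_witness_def\<close>)
  have branching: "card {j. j # w \<in> graft J T} = k - 1"
    if "w \<in> graft J T" "enat (length w) < eSuc h" for w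
    using that(1)
  proof (cases rule: mem_graftE)
    case 1
    have "{j. [j] \<in> graft J T} = J"
      using T snoc_mem_graft[of "[]"] by (auto simp: tree_witness_def)
    then show ?thesis using 1 \<open>card J = k - 1\<close> by simp
  next
    case (2 v i)
    then have "{j. j # w \<in> graft J T} = {j. j # v \<in> T i}"
      using snoc_mem_graft[of "_ # v"] by auto
    moreover have "enat (length v) < h"
      using 2 that(2) by (simp add: eSuc_enat[symmetric])
    ultimately show ?thesis using 2 T[of i] by (simp add: tree_witness_def)
  qed
  show ?thesis
    unfolding tree_witness_def using live closed branching by simp
qed

lemma B_inf_children: "B_inf N k \<Longrightarrow> k - 1 \<le> card {i. i < N [] \<and> B_inf (subtree N i) k}"
  using card_children_with_witness[of N k \<infinity> "{}"] by (auto simp: B_inf_iff_witness subtree_set_def)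

definition good_children :: "(label \<Rightarrow> nat) \<Rightarrow> nat \<Rightarrow> nat \<Rightarrow> label set \<Rightarrow> nat set" where
  "good_children N k d D = {i. i < N [] \<and> has_tree_height (subtree N i) k d (subtree_set D i)}"

lemma finite_good_children [simp]: "finite (good_children N k d D)"
  by (simp add: good_children_def)

lemma has_tree_height_0: "has_tree_height N k 0 D \<longleftrightarrow> [] \<notin> D"
proof
  assume "has_tree_height N k 0 D"
  then obtain S where S: "tree_witness N k 0 D S"
    by (auto simp: has_tree_height_iff_witness zero_enat_def)
  then have "[] \<in> S" by (simp add: tree_witness_def)
  with S show "[] \<notin> D" unfolding tree_witness_def by (meson suffix_order.refl)
next
  assume "[] \<notin> D"
  then show "has_tree_height N k 0 D"
    unfolding has_tree_height_def by (intro exI[of _ "{[]}"]) simp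
qed

lemma has_tree_height_Suc:
  assumes "[] \<notin> D"
  shows "has_tree_height N k (Suc d) D \<longleftrightarrow> k - 1 \<le> card (good_children N k d D)"
proof
  assume "has_tree_height N k (Suc d) D"
  then show "k - 1 \<le> card (good_children N k d D)"
    using card_children_with_witness[of N k "enat d" D]
    by (auto simp: has_tree_height_iff_witness good_children_def eSuc_enat)
next
  assume "k - 1 \<le> card (good_children N k d D)"
  then obtain J where J: "J \<subseteq> good_children N k d D" "card J = k - 1"
    by (meson obtain_subset_with_card_n)
  then have "\<forall>i\<in>J. \<exists>S. i < N [] \<and> tree_witness (subtree N i) k (enat d) (subtree_set D i) S"
    by (auto simp: good_children_def has_tree_height_iff_witness)
  then obtain T where
    "\<And>i. i \<in> J \<Longrightarrow> i < N [] \<and> tree_witness (subtree N i) k (enat d) (subtree_set D i) (T i)"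
    by metis
  then have "tree_witness N k (eSuc (enat d)) D (graft J T)"
    using assms J by (intro tree_witness_graft)
  then show "has_tree_height N k (Suc d) D"
    by (auto simp: has_tree_height_iff_witness eSuc_enat)
qed

lemma has_tree_height_antimono:
  assumes "has_tree_height N k d D" "D' \<subseteq> D"
  shows "has_tree_height N k d D'"
proof -
  obtain S where "tree_witness N k (enat d) D S"
    using assms(1) by (auto simp: has_tree_height_iff_witness)
  then have "tree_witness N k (enat d) D' S"
    using assms(2) unfolding tree_witness_def by blast
  then show ?thesis by (auto simp: has_tree_height_iff_witness)
qed

lemma good_children_insert_snoc:
  "good_children N k d (insert (v @ [i]) D) =
    (if i < N [] \<and> has_tree_height (subtree N i) k d (insert v (subtree_set D i))
     then good_children N k d D else good_children N k d D - {i})"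
proof -
  have "subtree_set (insert (v @ [i]) D) j
      = (if j = i then insert v (subtree_set D i) else subtree_set D j)" for j
    by (auto simp: subtree_set_def)
  then show ?thesis
    using has_tree_height_antimono[of "subtree N i" k d "insert v (subtree_set D i)"]
    by (auto simp: good_children_def)
qed

lemma R_ev_del_0: "\<not> R_ev_del N k 0 D"
  by (simp add: R_ev_del_def has_tree_height_0)

lemma leaf_Suc_iff:
  "alive N w \<and> length w = Suc d \<and> w \<notin> D \<longleftrightarrow> (\<exists>v i. w = v @ [i] \<and> i < N [] \<and>
     alive (subtree N i) v \<and> length v = d \<and> v \<notin> subtree_set D i)"
  by (cases w rule: rev_cases) (auto simp: alive_snoc)

lemma R_ev_del_Suc_child:
  assumes R: "R_ev_del N k (Suc d) D" and "[] \<notin> D"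
    and card_G: "card (good_children N k d D) = k - 1" and i: "i \<in> good_children N k d D"
  shows "R_ev_del (subtree N i) k d (subtree_set D i)"
  unfolding R_ev_del_def
proof (intro conjI allI impI)
  show "has_tree_height (subtree N i) k d (subtree_set D i)"
    using i by (simp add: good_children_def)
  fix v assume "alive (subtree N i) v \<and> length v = d \<and> v \<notin> subtree_set D i"
  then have "alive N (v @ [i]) \<and> length (v @ [i]) = Suc d \<and> v @ [i] \<notin> D"
    using i by (simp add: alive_snoc good_children_def)
  then have "has_tree_height N k (Suc d) (insert (v @ [i]) D)"
    using R unfolding R_ev_del_def by blast
  then have card_del: "k - 1 \<le> card (good_children N k d (insert (v @ [i]) D))"
    using has_tree_height_Suc[of "insert (v @ [i]) D"] \<open>[] \<notin> D\<close> by simp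
  show "has_tree_height (subtree N i) k d (insert v (subtree_set D i))"
  proof (rule ccontr)
    assume "\<not> ?thesis"
    then have "card (good_children N k d (insert (v @ [i]) D)) = card (good_children N k d D) - 1"
      using i by (simp add: good_children_insert_snoc)
    moreover have "0 < card (good_children N k d D)"
      using i by (metis card_gt_0_iff empty_iff finite_good_children)
    ultimately show False using card_del card_G by linarith
  qed
qed

lemma R_ev_del_Suc_delete_leaf:
  assumes "[] \<notin> D" and "i < N []" "alive (subtree N i) v" "length v = d" "v \<notin> subtree_set D i"
    and G: "k \<le> card (good_children N k d D) \<or> (card (good_children N k d D) = k - 1 \<and>
      (\<forall>i\<in>good_children N k d D. R_ev_del (subtree N i) k d (subtree_set D i)))"
  shows "has_tree_height N k (Suc d) (insert (v @ [i]) D)"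
proof -
  let ?G = "good_children N k d D" and ?G' = "good_children N k d (insert (v @ [i]) D)"
  have "k - 1 \<le> card ?G'"
  proof (cases "k \<le> card ?G")
    case True
    have "card ?G - 1 \<le> card (?G - {i})"
      using diff_card_le_card_Diff[of "{i}" ?G] by simp
    also have "\<dots> \<le> card ?G'"
      by (intro card_mono) (auto simp: good_children_insert_snoc)
    finally show ?thesis using True by simp
  next
    case False
    with G have "card ?G = k - 1" "\<forall>i\<in>?G. R_ev_del (subtree N i) k d (subtree_set D i)" by auto
    then have "?G \<subseteq> ?G'"
      using assms by (auto simp: good_children_insert_snoc R_ev_del_def)
    then have "card ?G \<le> card ?G'" by (rule card_mono[OF finite_good_children])
    then show ?thesis using \<open>card ?G = k - 1\<close> by simp
  qed
  then show ?thesis using has_tree_height_Suc[of "insert (v @ [i]) D"] \<open>[] \<notin> D\<close> by simp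
qed

lemma R_ev_del_Suc:
  assumes "[] \<notin> D"
  shows "R_ev_del N k (Suc d) D \<longleftrightarrow> k \<le> card (good_children N k d D) \<or>
    (card (good_children N k d D) = k - 1 \<and>
     (\<forall>i\<in>good_children N k d D. R_ev_del (subtree N i) k d (subtree_set D i)))"
proof
  assume R: "R_ev_del N k (Suc d) D"
  then have "k - 1 \<le> card (good_children N k d D)"
    using has_tree_height_Suc[OF assms] by (simp add: R_ev_del_def)
  then show "k \<le> card (good_children N k d D) \<or> (card (good_children N k d D) = k - 1 \<and>
     (\<forall>i\<in>good_children N k d D. R_ev_del (subtree N i) k d (subtree_set D i)))"
  proof (cases "k \<le> card (good_children N k d D)")
    case False
    with \<open>k - 1 \<le> card (good_children N k d D)\<close> have "card (good_children N k d D) = k - 1"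
      by linarith
    then show ?thesis using R_ev_del_Suc_child[OF R assms] by simp
  qed simp
next
  assume G: "k \<le> card (good_children N k d D) \<or> (card (good_children N k d D) = k - 1 \<and>
     (\<forall>i\<in>good_children N k d D. R_ev_del (subtree N i) k d (subtree_set D i)))"
  then have "has_tree_height N k (Suc d) D"
    using has_tree_height_Suc[OF assms] by auto
  moreover have "has_tree_height N k (Suc d) (insert w D)"
    if leaf: "alive N w \<and> length w = Suc d \<and> w \<notin> D" for w
  proof -
    obtain v i where "w = v @ [i]" "i < N []" "alive (subtree N i) v" "length v = d"
      "v \<notin> subtree_set D i"
      using leaf leaf_Suc_iff[of N w d D] by blast
    then show ?thesis using R_ev_del_Suc_delete_leaf[OF assms _ _ _ _ G] by simp
  qed
  ultimately show "R_ev_del N k (Suc d) D" by (simp add: R_ev_del_def)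
qed

section \<open>Independence of the subtrees of the root\<close>

definition iid_labels :: "'a pmf \<Rightarrow> (label \<Rightarrow> 'a) measure" where
  "iid_labels q = PiM UNIV (\<lambda>_. measure_pmf q)"

lemma space_iid_labels [simp]: "space (iid_labels q) = UNIV"
  by (simp add: iid_labels_def space_PiM)

lemma prob_space_iid_labels: "prob_space (iid_labels q)"
  unfolding iid_labels_def by (intro prob_space_PiM) (simp add: prob_space_measure_pmf)

lemma measurable_subtree: "(\<lambda>\<omega>. subtree \<omega> i) \<in> iid_labels q \<rightarrow>\<^sub>M iid_labels q"
  unfolding iid_labels_def subtree_def
  by (rule measurable_PiM_single') (auto simp: space_PiM intro!: measurable_component_singleton)

lemma measurable_root: "(\<lambda>\<omega>. \<omega> []) \<in> iid_labels q \<rightarrow>\<^sub>M measure_pmf q"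
  unfolding iid_labels_def by measurable

lemma distr_subtree: "distr (iid_labels q) (iid_labels q) (\<lambda>\<omega>. subtree \<omega> i) = iid_labels q"
proof -
  have reindex: "distr (iid_labels q) (\<Pi>\<^sub>M v\<in>UNIV. measure_pmf q) (\<lambda>\<omega>. \<lambda>v\<in>UNIV. \<omega> (v @ [i]))
      = (\<Pi>\<^sub>M v\<in>UNIV. measure_pmf q)"
    unfolding iid_labels_def
    by (rule distr_PiM_reindex[where f="\<lambda>v. v @ [i]" and M="\<lambda>_. measure_pmf q", simplified])
       (auto simp: prob_space_measure_pmf inj_on_def)
  have restrict_eq: "(\<lambda>\<omega>. \<lambda>v\<in>UNIV. \<omega> (v @ [i])) = (\<lambda>\<omega>. subtree \<omega> i)"
    by (auto simp: restrict_def subtree_def)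
  show ?thesis using reindex unfolding restrict_eq iid_labels_def .
qed

lemma distr_root: "distr (iid_labels q) (measure_pmf q) (\<lambda>\<omega>. \<omega> []) = measure_pmf q"
  unfolding iid_labels_def by (rule distr_PiM_component) (auto simp: prob_space_measure_pmf)

lemma indep_vars_labels: "prob_space.indep_vars (iid_labels q) (\<lambda>_. measure_pmf q) (\<lambda>v \<omega>. \<omega> v) UNIV"
proof -
  interpret prob_space "iid_labels q" by (rule prob_space_iid_labels)
  have "distr (iid_labels q) (\<Pi>\<^sub>M v\<in>UNIV. measure_pmf q) (\<lambda>\<omega>. \<lambda>v\<in>UNIV. \<omega> v) = iid_labels q"
    by (simp add: iid_labels_def restrict_UNIV)
  also have "\<dots> = (\<Pi>\<^sub>M v\<in>UNIV. distr (iid_labels q) (measure_pmf q) (\<lambda>\<omega>. \<omega> v))"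
    unfolding iid_labels_def
    by (intro PiM_cong refl distr_PiM_component[symmetric]) (auto simp: prob_space_measure_pmf)
  finally show ?thesis
    by (subst indep_vars_iff_distr_eq_PiM) (auto simp: iid_labels_def)
qed

text \<open>The root value is embedded as a constant configuration, so that it joins the subtrees of
  the children in one family of independent variables with a common range.\<close>
definition root_or_subtree :: "nat option \<Rightarrow> (label \<Rightarrow> 'a) \<Rightarrow> label \<Rightarrow> 'a" where
  "root_or_subtree x \<omega> = (case x of None \<Rightarrow> (\<lambda>_. \<omega> []) | Some i \<Rightarrow> subtree \<omega> i)"

lemma indep_vars_root_or_subtree:
  "prob_space.indep_vars (iid_labels q) (\<lambda>_. iid_labels q) root_or_subtree UNIV"
proof -
  interpret prob_space "iid_labels q" by (rule prob_space_iid_labels)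
  define K where "K x = (case x of None \<Rightarrow> {[]} | Some i \<Rightarrow> range (\<lambda>v::label. v @ [i]))" for x
  define Y :: "nat option \<Rightarrow> (label \<Rightarrow> 'a) \<Rightarrow> label \<Rightarrow> 'a"
    where "Y x = (case x of None \<Rightarrow> (\<lambda>\<omega> _. \<omega> []) | Some i \<Rightarrow> (\<lambda>\<omega> v. \<omega> (v @ [i])))" for x
  have "indep_vars (\<lambda>x. PiM (K x) (\<lambda>_. measure_pmf q)) (\<lambda>x \<omega>. restrict \<omega> (K x)) UNIV"
    by (rule indep_vars_restrict[OF indep_vars_labels])
      (auto simp: disjoint_family_on_def K_def split: option.splits)
  moreover have "Y x \<in> PiM (K x) (\<lambda>_. measure_pmf q) \<rightarrow>\<^sub>M iid_labels q" for x
    unfolding Y_def iid_labels_def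
    by (cases x; simp; rule measurable_PiM_single')
      (auto simp: space_PiM K_def intro!: measurable_component_singleton)
  ultimately have "indep_vars (\<lambda>_. iid_labels q) (\<lambda>x \<omega>. Y x (restrict \<omega> (K x))) UNIV"
    by (rule indep_vars_compose2)
  moreover have "(\<lambda>x \<omega>. Y x (restrict \<omega> (K x))) = root_or_subtree"
    by (auto simp: fun_eq_iff Y_def K_def root_or_subtree_def subtree_def split: option.splits)
  ultimately show ?thesis by simp
qed

lemma sets_root_event: "{\<omega>. P (\<omega> [])} \<in> sets (iid_labels q)"
proof -
  have "{\<omega>. P (\<omega> [])} = (\<lambda>\<omega>. \<omega> []) -` {x. P x} \<inter> space (iid_labels q)" by auto
  also have "\<dots> \<in> sets (iid_labels q)" by (rule measurable_sets[OF measurable_root]) simp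
  finally show ?thesis .
qed

lemma sets_subtree_event [simp]:
  "B \<in> sets (iid_labels q) \<Longrightarrow> {\<omega>. subtree \<omega> i \<in> B} \<in> sets (iid_labels q)"
  using measurable_sets[OF measurable_subtree] by (simp add: vimage_def)

lemma measure_root_count: "measure (iid_labels q) {\<omega>. cnt (\<omega> []) = n} = pmf (map_pmf cnt q) n"
proof -
  have "measure (iid_labels q) {\<omega>. cnt (\<omega> []) = n}
      = measure (iid_labels q) ((\<lambda>\<omega>. \<omega> []) -` (cnt -` {n}) \<inter> space (iid_labels q))"
    by (simp add: vimage_def)
  also have "\<dots> = measure (distr (iid_labels q) (measure_pmf q) (\<lambda>\<omega>. \<omega> [])) (cnt -` {n})"
    by (rule measure_distr[symmetric], rule measurable_root, simp)
  also have "\<dots> = pmf (map_pmf cnt q) n" by (simp add: distr_root pmf_map)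
  finally show ?thesis .
qed

lemma measure_subtree_event:
  assumes "B \<in> sets (iid_labels q)"
  shows "measure (iid_labels q) {\<omega>. subtree \<omega> i \<in> B} = measure (iid_labels q) B"
proof -
  have "measure (iid_labels q) {\<omega>. subtree \<omega> i \<in> B}
      = measure (iid_labels q) ((\<lambda>\<omega>. subtree \<omega> i) -` B \<inter> space (iid_labels q))"
    by (simp add: vimage_def)
  also have "\<dots> = measure (distr (iid_labels q) (iid_labels q) (\<lambda>\<omega>. subtree \<omega> i)) B"
    by (rule measure_distr[symmetric]) (simp_all add: assms measurable_subtree)
  finally show ?thesis by (simp add: distr_subtree)
qed

definition children_pattern ::
    "('a \<Rightarrow> nat) \<Rightarrow> (label \<Rightarrow> 'a) set \<Rightarrow> (label \<Rightarrow> 'a) set \<Rightarrow> nat \<Rightarrow> nat set \<Rightarrow> (label \<Rightarrow> 'a) set" where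
  "children_pattern cnt E F n J = {\<omega>. cnt (\<omega> []) = n \<and>
     (\<forall>i<n. (i \<in> J \<longrightarrow> subtree \<omega> i \<in> F) \<and> (i \<notin> J \<longrightarrow> subtree \<omega> i \<notin> E))}"

lemma sets_children_pattern:
  assumes "E \<in> sets (iid_labels q)" "F \<in> sets (iid_labels q)"
  shows "children_pattern cnt E F n J \<in> sets (iid_labels q)"
proof -
  have "children_pattern cnt E F n J = {\<omega>. cnt (\<omega> []) = n} \<inter>
      (\<Inter>i<n. if i \<in> J then {\<omega>. subtree \<omega> i \<in> F} else UNIV - {\<omega>. subtree \<omega> i \<in> E})"
    by (auto simp: children_pattern_def)
  also have "\<dots> \<in> sets (iid_labels q)"
  proof (intro sets.Int sets_root_event sets.countable_INT'')
    fix i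
    show "(if i \<in> J then {\<omega>. subtree \<omega> i \<in> F} else UNIV - {\<omega>. subtree \<omega> i \<in> E})
        \<in> sets (iid_labels q)"
      using assms sets.compl_sets[of _ "iid_labels q"] by simp
  qed (use sets.top[of "iid_labels q"] in simp_all)
  finally show ?thesis .
qed

lemma measure_children_pattern:
  assumes E: "E \<in> sets (iid_labels q)" and F: "F \<in> sets (iid_labels q)" and J: "J \<subseteq> {..<n}"
  shows "measure (iid_labels q) (children_pattern cnt E F n J)
    = pmf (map_pmf cnt q) n * measure (iid_labels q) F ^ card J
      * (1 - measure (iid_labels q) E) ^ (n - card J)"
proof -
  interpret prob_space "iid_labels q" by (rule prob_space_iid_labels)
  define A where
    "A x = (case x of None \<Rightarrow> {\<omega>. cnt (\<omega> []) = n} | Some i \<Rightarrow> if i \<in> J then F else UNIV - E)"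
    for x
  define I where "I = insert None (Some ` {..<n})"
  have A: "A x \<in> sets (iid_labels q)" for x
    using E F sets.compl_sets[of E "iid_labels q"] sets_root_event
    by (auto simp: A_def split: option.splits)
  have "children_pattern cnt E F n J = (\<Inter>x\<in>I. root_or_subtree x -` A x \<inter> space (iid_labels q))"
    by (auto simp: children_pattern_def I_def A_def root_or_subtree_def)
  then have "prob (children_pattern cnt E F n J) = (\<Prod>x\<in>I. prob (root_or_subtree x -` A x))"
    using indep_varsD[OF indep_vars_root_or_subtree, of I A] A by (simp add: I_def)
  also have "\<dots> = prob {\<omega>. cnt (\<omega> []) = n} * (\<Prod>i<n. if i \<in> J then prob F else prob (UNIV - E))"
    by (simp add: I_def prod.reindex A_def root_or_subtree_def vimage_def measure_subtree_event E F
        sets.compl_sets[OF E, simplified] if_distrib[of "measure (iid_labels q)"])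
  also have "\<dots> = pmf (map_pmf cnt q) n * prob F ^ card J * (1 - prob E) ^ (n - card J)"
  proof -
    have "{..<n} \<inter> {i. i \<in> J} = J" "{..<n} \<inter> - {i. i \<in> J} = {..<n} - J" using J by auto
    moreover have "card ({..<n} - J) = n - card J"
      using J by (simp add: card_Diff_subset finite_subset)
    ultimately show ?thesis
      by (simp add: prod.If_cases measure_root_count prob_compl[OF E, simplified] mult.assoc)
  qed
  finally show ?thesis .
qed

lemma poisson_binomial_sums:
  assumes "0 < lam"
  shows "(\<lambda>n. pmf (poisson_pmf lam) n * real (n choose j) * a ^ j * b ^ (n - j))
           sums (exp (-lam) * (lam * a) ^ j / fact j * exp (lam * b))"
proof -
  have "(\<lambda>m. (exp (-lam) * (lam * a) ^ j / fact j) * ((lam * b) ^ m /\<^sub>R fact m))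
      sums ((exp (-lam) * (lam * a) ^ j / fact j) * exp (lam * b))"
    by (intro sums_mult exp_converges)
  moreover have "(exp (-lam) * (lam * a) ^ j / fact j) * ((lam * b) ^ m /\<^sub>R fact m)
      = pmf (poisson_pmf lam) (m + j) * real ((m + j) choose j) * a ^ j * b ^ (m + j - j)" for m
  proof -
    have "real ((m + j) choose j) = fact (m + j) / (fact j * fact m)"
      using binomial_fact[of j "m + j", where 'a=real] by simp
    then show ?thesis using assms
      by (simp add: power_add power_mult_distrib divide_simps)
  qed
  ultimately show ?thesis
    by (subst sums_zero_iff_shift[where n=j, symmetric]) auto
qed

definition children_count :: "('a \<Rightarrow> nat) \<Rightarrow> (label \<Rightarrow> 'a) set \<Rightarrow> (label \<Rightarrow> 'a) \<Rightarrow> nat" where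
  "children_count cnt E \<omega> = card {i. i < cnt (\<omega> []) \<and> subtree \<omega> i \<in> E}"

definition children_in ::
    "('a \<Rightarrow> nat) \<Rightarrow> (label \<Rightarrow> 'a) set \<Rightarrow> (label \<Rightarrow> 'a) set \<Rightarrow> nat \<Rightarrow> (label \<Rightarrow> 'a) set" where
  "children_in cnt E F j = {\<omega>. children_count cnt E \<omega> = j \<and>
     (\<forall>i<cnt (\<omega> []). subtree \<omega> i \<in> E \<longrightarrow> subtree \<omega> i \<in> F)}"

lemma children_pattern_determines:
  assumes "F \<subseteq> E" "J \<subseteq> {..<n}" "\<omega> \<in> children_pattern cnt E F n J"
  shows "{i. i < n \<and> subtree \<omega> i \<in> E} = J"
  using assms by (auto simp: children_pattern_def)

lemma children_in_root_count_eq: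
  assumes "F \<subseteq> E"
  shows "children_in cnt E F j \<inter> {\<omega>. cnt (\<omega> []) = n}
    = (\<Union>J\<in>{J. J \<subseteq> {..<n} \<and> card J = j}. children_pattern cnt E F n J)"
proof (intro equalityI subsetI)
  fix \<omega> assume "\<omega> \<in> children_in cnt E F j \<inter> {\<omega>. cnt (\<omega> []) = n}"
  then have "\<omega> \<in> children_pattern cnt E F n {i. i < n \<and> subtree \<omega> i \<in> E}"
    "{i. i < n \<and> subtree \<omega> i \<in> E} \<in> {J. J \<subseteq> {..<n} \<and> card J = j}"
    by (auto simp: children_in_def children_count_def children_pattern_def)
  then show "\<omega> \<in> (\<Union>J\<in>{J. J \<subseteq> {..<n} \<and> card J = j}. children_pattern cnt E F n J)" by blast
next
  fix \<omega> assume "\<omega> \<in> (\<Union>J\<in>{J. J \<subseteq> {..<n} \<and> card J = j}. children_pattern cnt E F n J)"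
  then obtain J where J: "J \<subseteq> {..<n}" "card J = j" "\<omega> \<in> children_pattern cnt E F n J" by auto
  then have "{i. i < n \<and> subtree \<omega> i \<in> E} = J" using assms by (intro children_pattern_determines)
  then show "\<omega> \<in> children_in cnt E F j \<inter> {\<omega>. cnt (\<omega> []) = n}"
    using J assms by (auto simp: children_in_def children_count_def children_pattern_def)
qed

context
  fixes q :: "'a pmf" and E F :: "(label \<Rightarrow> 'a) set"
  assumes E: "E \<in> sets (iid_labels q)" and F: "F \<in> sets (iid_labels q)" and "F \<subseteq> E"
begin

interpretation prob_space "iid_labels q" by (rule prob_space_iid_labels)

lemma children_in_root_count:
  "children_in cnt E F j \<inter> {\<omega>. cnt (\<omega> []) = n} \<in> sets (iid_labels q)"
  "measure (iid_labels q) (children_in cnt E F j \<inter> {\<omega>. cnt (\<omega> []) = n}) =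
    pmf (map_pmf cnt q) n * real (n choose j) * measure (iid_labels q) F ^ j
    * (1 - measure (iid_labels q) E) ^ (n - j)"
proof -
  let ?S = "{J. J \<subseteq> {..<n} \<and> card J = j}"
  have fin: "finite ?S" by (rule finite_subset[of _ "Pow {..<n}"]) auto
  have pattern: "children_pattern cnt E F n ` ?S \<subseteq> sets (iid_labels q)"
    using sets_children_pattern[OF E F] by auto
  then show "children_in cnt E F j \<inter> {\<omega>. cnt (\<omega> []) = n} \<in> sets (iid_labels q)"
    unfolding children_in_root_count_eq[OF \<open>F \<subseteq> E\<close>] using fin by auto
  have "disjoint_family_on (children_pattern cnt E F n) ?S"
    unfolding disjoint_family_on_def
    using children_pattern_determines[OF \<open>F \<subseteq> E\<close>] by blast
  then have "measure (iid_labels q) (\<Union>J\<in>?S. children_pattern cnt E F n J)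
      = (\<Sum>J\<in>?S. measure (iid_labels q) (children_pattern cnt E F n J))"
    using fin pattern by (intro measure_finite_Union) (auto simp: emeasure_finite)
  also have "\<dots> = (\<Sum>J\<in>?S. pmf (map_pmf cnt q) n * measure (iid_labels q) F ^ j
      * (1 - measure (iid_labels q) E) ^ (n - j))"
    using measure_children_pattern[OF E F] by (intro sum.cong) auto
  also have "\<dots> = real (card ?S) * (pmf (map_pmf cnt q) n * measure (iid_labels q) F ^ j
      * (1 - measure (iid_labels q) E) ^ (n - j))"
    by simp
  also have "card ?S = n choose j" using n_subsets[of "{..<n}" j] by simp
  finally show "measure (iid_labels q) (children_in cnt E F j \<inter> {\<omega>. cnt (\<omega> []) = n}) =
    pmf (map_pmf cnt q) n * real (n choose j) * measure (iid_labels q) F ^ j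
    * (1 - measure (iid_labels q) E) ^ (n - j)"
    unfolding children_in_root_count_eq[OF \<open>F \<subseteq> E\<close>] by simp
qed

lemma sets_children_in: "children_in cnt E F j \<in> sets (iid_labels q)"
proof -
  have "children_in cnt E F j = (\<Union>n. children_in cnt E F j \<inter> {\<omega>. cnt (\<omega> []) = n})" by auto
  also have "\<dots> \<in> sets (iid_labels q)"
    by (rule sets.countable_UN) (use children_in_root_count(1) in auto)
  finally show ?thesis .
qed

lemma measure_children_in:
  assumes pois: "map_pmf cnt q = poisson_pmf lam" and "0 < lam"
  shows "measure (iid_labels q) (children_in cnt E F j) =
      exp (-(lam * measure (iid_labels q) E)) * (lam * measure (iid_labels q) F) ^ j / fact j"
proof -
  have "(\<lambda>n. measure (iid_labels q) (children_in cnt E F j \<inter> {\<omega>. cnt (\<omega> []) = n}))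
      sums measure (iid_labels q) (\<Union>n. children_in cnt E F j \<inter> {\<omega>. cnt (\<omega> []) = n})"
    by (rule finite_measure_UNION) (auto simp: disjoint_family_on_def children_in_root_count(1))
  moreover have "(\<lambda>n. measure (iid_labels q) (children_in cnt E F j \<inter> {\<omega>. cnt (\<omega> []) = n}))
      sums (exp (-lam) * (lam * measure (iid_labels q) F) ^ j / fact j
        * exp (lam * (1 - measure (iid_labels q) E)))"
    unfolding children_in_root_count(2) pois using poisson_binomial_sums[OF \<open>0 < lam\<close>] by simp
  moreover have "(\<Union>n. children_in cnt E F j \<inter> {\<omega>. cnt (\<omega> []) = n}) = children_in cnt E F j"
    by auto
  ultimately have "measure (iid_labels q) (children_in cnt E F j) =
      exp (-lam) * (lam * measure (iid_labels q) F) ^ j / fact j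
      * exp (lam * (1 - measure (iid_labels q) E))"
    using sums_unique2 by metis
  also have "\<dots> = exp (-(lam * measure (iid_labels q) E))
      * (lam * measure (iid_labels q) F) ^ j / fact j"
    by (simp add: mult_exp_exp algebra_simps)
  finally show ?thesis .
qed

end

lemma few_children_eq: "{\<omega>. children_count cnt E \<omega> < K} = (\<Union>j\<in>{..<K}. children_in cnt E E j)"
  by (auto simp: children_in_def)

context
  fixes q :: "'a pmf" and E :: "(label \<Rightarrow> 'a) set"
  assumes E: "E \<in> sets (iid_labels q)"
begin

interpretation prob_space "iid_labels q" by (rule prob_space_iid_labels)

lemma sets_few_children: "{\<omega>. children_count cnt E \<omega> < K} \<in> sets (iid_labels q)"
  unfolding few_children_eq using sets_children_in[OF E E order_refl] by auto

lemma measure_few_children: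
  assumes "map_pmf cnt q = poisson_pmf lam" and "0 < lam"
  shows "measure (iid_labels q) {\<omega>. children_count cnt E \<omega> < K}
    = poisson_cdf K (lam * measure (iid_labels q) E)"
proof -
  have "measure (iid_labels q) (\<Union>j\<in>{..<K}. children_in cnt E E j)
      = (\<Sum>j<K. measure (iid_labels q) (children_in cnt E E j))"
    using sets_children_in[OF E E order_refl]
    by (intro measure_finite_Union) (auto simp: disjoint_family_on_def children_in_def)
  then show ?thesis
    unfolding few_children_eq measure_children_in[OF E E order_refl assms]
    by (simp add: poisson_cdf_def poisson_term_def)
qed

end

section \<open>The marked recursion\<close>

definition unmarked :: "nat \<Rightarrow> (label \<Rightarrow> nat \<times> bool) \<Rightarrow> label set" where
  "unmarked d \<omega> = {u. length u = d \<and> \<not> snd (\<omega> u)}"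

definition tree_event :: "nat \<Rightarrow> nat \<Rightarrow> (label \<Rightarrow> nat \<times> bool) set" where
  "tree_event k d = {\<omega>. has_tree_height (fst \<circ> \<omega>) k d (unmarked d \<omega>)}"

definition robust_event :: "nat \<Rightarrow> nat \<Rightarrow> (label \<Rightarrow> nat \<times> bool) set" where
  "robust_event k d = {\<omega>. R_ev_del (fst \<circ> \<omega>) k d (unmarked d \<omega>)}"

lemma fst_comp_subtree: "fst \<circ> subtree \<omega> i = subtree (fst \<circ> \<omega>) i"
  by (auto simp: subtree_def)

lemma subtree_set_unmarked: "subtree_set (unmarked (Suc d) \<omega>) i = unmarked d (subtree \<omega> i)"
  by (auto simp: subtree_set_def unmarked_def subtree_def)

lemma Nil_notin_unmarked_Suc: "[] \<notin> unmarked (Suc d) \<omega>"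
  by (simp add: unmarked_def)

lemma robust_event_subset: "robust_event k d \<subseteq> tree_event k d"
  by (auto simp: robust_event_def tree_event_def R_ev_del_def)

lemma good_children_unmarked:
  "good_children (fst \<circ> \<omega>) k d (unmarked (Suc d) \<omega>)
    = {i. i < fst (\<omega> []) \<and> subtree \<omega> i \<in> tree_event k d}"
  by (simp add: good_children_def tree_event_def subtree_set_unmarked fst_comp_subtree)

lemma tree_event_0: "tree_event k 0 = {\<omega>. snd (\<omega> [])}"
  by (auto simp: tree_event_def has_tree_height_0 unmarked_def)

lemma robust_event_0: "robust_event k 0 = {}"
  by (simp add: robust_event_def R_ev_del_0)

lemma tree_event_Suc:
  "tree_event k (Suc d) = UNIV - {\<omega>. children_count fst (tree_event k d) \<omega> < k - 1}"
  by (auto simp: tree_event_def has_tree_height_Suc[OF Nil_notin_unmarked_Suc]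
      good_children_unmarked children_count_def)

lemma robust_event_Suc:
  "robust_event k (Suc d) = (UNIV - {\<omega>. children_count fst (tree_event k d) \<omega> < k})
     \<union> children_in fst (tree_event k d) (robust_event k d) (k - 1)"
proof -
  have "R_ev_del (subtree (fst \<circ> \<omega>) i) k d (subtree_set (unmarked (Suc d) \<omega>) i) \<longleftrightarrow>
      subtree \<omega> i \<in> robust_event k d" for \<omega> i
    by (simp add: robust_event_def subtree_set_unmarked fst_comp_subtree)
  then show ?thesis
    by (auto simp: robust_event_def R_ev_del_Suc[OF Nil_notin_unmarked_Suc] good_children_unmarked
        children_in_def children_count_def)
qed

lemma sets_tree_event_robust_event:
  "tree_event k d \<in> sets (iid_labels q) \<and> robust_event k d \<in> sets (iid_labels q)"
proof (induction d)
  case 0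
  show ?case by (simp add: tree_event_0 robust_event_0 sets_root_event)
next
  case (Suc d)
  then have "tree_event k d \<in> sets (iid_labels q)" "robust_event k d \<in> sets (iid_labels q)" by auto
  note few = sets_few_children[OF this(1)]
  have "tree_event k (Suc d) \<in> sets (iid_labels q)"
    using sets.compl_sets[OF few] by (simp add: tree_event_Suc)
  moreover have "robust_event k (Suc d) \<in> sets (iid_labels q)"
    using sets.compl_sets[OF few] sets_children_in[OF Suc.IH[THEN conjunct1] Suc.IH[THEN conjunct2]
        robust_event_subset]
    by (simp add: robust_event_Suc)
  ultimately show ?case ..
qed

lemma measure_tree_event_robust_event:
  assumes "0 < k" "0 < lam" and pois: "map_pmf fst q = poisson_pmf lam"
    and mark: "map_pmf snd q = bernoulli_pmf p" "0 \<le> p" "p \<le> 1"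
  shows "measure (iid_labels q) (tree_event k 0) = p"
    and "measure (iid_labels q) (robust_event k 0) = 0"
    and "measure (iid_labels q) (tree_event k (Suc d))
      = 1 - poisson_cdf (k - 1) (lam * measure (iid_labels q) (tree_event k d))"
    and "measure (iid_labels q) (robust_event k (Suc d))
      = 1 - poisson_cdf k (lam * measure (iid_labels q) (tree_event k d))
        + exp (-(lam * measure (iid_labels q) (tree_event k d)))
          * (lam * measure (iid_labels q) (robust_event k d)) ^ (k - 1) / fact (k - 1)"
proof -
  interpret prob_space "iid_labels q" by (rule prob_space_iid_labels)
  show "prob (tree_event k 0) = p"
    using measure_root_count[where cnt=snd and n=True and q=q] mark by (simp add: tree_event_0)
  show "prob (robust_event k 0) = 0" by (simp add: robust_event_0)
  have G: "tree_event k d \<in> events" and R: "robust_event k d \<in> events"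
    using sets_tree_event_robust_event by auto
  let ?few = "\<lambda>K. {\<omega>. children_count fst (tree_event k d) \<omega> < K}"
  have few: "prob (UNIV - ?few K) = 1 - poisson_cdf K (lam * prob (tree_event k d))" for K
    using prob_compl[OF sets_few_children[OF G]] measure_few_children[OF G pois \<open>0 < lam\<close>] by simp
  then show "prob (tree_event k (Suc d)) = 1 - poisson_cdf (k - 1) (lam * prob (tree_event k d))"
    by (simp add: tree_event_Suc)
  have "prob (robust_event k (Suc d))
      = prob (UNIV - ?few k) + prob (children_in fst (tree_event k d) (robust_event k d) (k - 1))"
    unfolding robust_event_Suc using \<open>0 < k\<close> sets.compl_sets[OF sets_few_children[OF G]]
      sets_children_in[OF G R robust_event_subset]
    by (intro finite_measure_Union) (auto simp: children_in_def)
  then show "prob (robust_event k (Suc d)) = 1 - poisson_cdf k (lam * prob (tree_event k d))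
      + exp (-(lam * prob (tree_event k d))) * (lam * prob (robust_event k d)) ^ (k - 1)
        / fact (k - 1)"
    using few measure_children_in[OF G R robust_event_subset pois \<open>0 < lam\<close>] by simp
qed

lemma r_eq_measure_robust_event:
  "r k lam d p
    = measure (iid_labels (pair_pmf (poisson_pmf lam) (bernoulli_pmf p))) (robust_event k d)"
  unfolding r_def MGW_def iid_labels_def[symmetric] robust_event_def unmarked_def by simp

lemma beta_le_poisson_tail:
  assumes "0 < lam" and B: "{N \<in> space (GW lam). B_inf N k} \<in> sets (GW lam)"
  shows "beta k lam \<le> 1 - poisson_cdf (k - 1) (lam * beta k lam)"
proof -
  interpret prob_space "iid_labels (poisson_pmf lam)" by (rule prob_space_iid_labels)
  have GW: "GW lam = iid_labels (poisson_pmf lam)" by (simp add: GW_def iid_labels_def)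
  define B where "B = {N. B_inf N k}"
  have B_sets: "B \<in> events" using B by (simp add: GW B_def)
  let ?few = "{N. children_count id B N < k - 1}"
  have "B \<subseteq> UNIV - ?few"
    by (auto simp: B_def children_count_def dest!: B_inf_children)
  then have "prob B \<le> prob (UNIV - ?few)"
    using sets.compl_sets[OF sets_few_children[OF B_sets]] by (intro finite_measure_mono) simp_all
  also have "\<dots> = 1 - poisson_cdf (k - 1) (lam * prob B)"
    using prob_compl[OF sets_few_children[OF B_sets]] measure_few_children[OF B_sets _ \<open>0 < lam\<close>]
    by simp
  finally show ?thesis by (simp add: beta_def GW B_def)
qed

lemma beta_le_1: "beta k lam \<le> 1"
  using prob_space.prob_le_1[OF prob_space_iid_labels]
  by (simp add: beta_def GW_def iid_labels_def)

lemma r_exceeds_fixed_point: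
  assumes "2 \<le> k" "0 < lam1" "lam1 < lam2"
    and b: "0 < b" "b \<le> 1" "b \<le> 1 - poisson_cdf (k - 1) (lam1 * b)"
  shows "\<exists>d. b < r k lam2 d b"
proof -
  define q where "q = pair_pmf (poisson_pmf lam2) (bernoulli_pmf b)"
  define g where "g d = measure (iid_labels q) (tree_event k d)" for d
  define rho where "rho d = measure (iid_labels q) (robust_event k d)" for d
  obtain n where k: "k = Suc (Suc n)" using \<open>2 \<le> k\<close> by (metis add_2_eq_Suc le_Suc_ex)
  have "0 < k" "0 < lam2" "map_pmf fst q = poisson_pmf lam2" "map_pmf snd q = bernoulli_pmf b"
    using assms by (simp_all add: k q_def map_fst_pair_pmf map_snd_pair_pmf)
  note rec =
    measure_tree_event_robust_event[OF this less_imp_le[OF b(1)] b(2), folded g_def rho_def]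
  have "\<exists>d. b < rho d"
  proof (rule robust_iteration_exceeds)
    show "0 < lam1" "lam1 < lam2" "0 < b" "b \<le> 1 - poisson_cdf (Suc n) (lam1 * b)"
      using assms by (simp_all add: k)
    show "g 0 = b" "g (Suc d) = 1 - poisson_cdf (Suc n) (lam2 * g d)"
      "rho (Suc d) = 1 - poisson_cdf (Suc (Suc n)) (lam2 * g d)
        + exp (-(lam2 * g d)) * (lam2 * rho d) ^ Suc n / fact (Suc n)" for d
      using rec by (simp_all add: k)
    show "0 \<le> rho d" "rho d \<le> g d" for d
      using finite_measure.finite_measure_mono[OF
          prob_space.finite_measure[OF prob_space_iid_labels] robust_event_subset]
        sets_tree_event_robust_event
      by (auto simp: rho_def g_def)
  qed
  then show ?thesis by (simp add: r_eq_measure_robust_event q_def rho_def)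
qed

theorem lemma3:
  fixes k :: nat and lam1 lam2 :: real
  assumes "k \<ge> 2" and "0 < lam1" and "lam1 < lam2"
    and "isCont (beta k) lam1"
  shows "\<exists>d::nat. r k lam2 d (beta k lam1) \<ge> beta k lam1"
proof (cases "{N \<in> space (GW lam1). B_inf N k} \<in> sets (GW lam1) \<and> 0 < beta k lam1")
  case True
  then obtain d where "beta k lam1 < r k lam2 d (beta k lam1)"
    using r_exceeds_fixed_point[OF assms(1-3)] beta_le_1 beta_le_poisson_tail[OF \<open>0 < lam1\<close>]
    by blast
  then show ?thesis by (auto intro: less_imp_le)
next
  case False
  text \<open>A non-measurable event B has measure 0 by convention, so then the claim is trivial.\<close>
  have "beta k lam1 = 0"
  proof (cases "{N \<in> space (GW lam1). B_inf N k} \<in> sets (GW lam1)")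
    case True
    moreover have "0 \<le> beta k lam1" by (simp add: beta_def)
    ultimately show ?thesis using False by linarith
  qed (simp add: beta_def measure_notin_sets)
  then show ?thesis by (auto simp: r_def)
qed

end
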